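(* Let $\mu,\lambda$ be positive integers with $\lambda\ge e\mu$. Let $(X_t)_{t\ge0}$ and $(\Delta_t)_{t\ge0}$ be random processes such that for some $\Delta_{\min}\in(0,\lambda)$ we have $\Delta_t\ge\Delta_{\min}$ for all $t$, and for all $t\in\mathbb{N}$, conditionally on the history up to time $t$, $X_{t+1}$ has the law of $\min\{\mu,B\}$ with $B\sim\mathrm{Bin}\big(\lambda,\frac{X_t+\Delta_t}{e\mu}\big)$ (where it is assumed that $\frac{X_t+\Delta_t}{e\mu}\le1$). Let $X'$ satisfy $\max\{18\ln\frac{2\lambda}{\Delta_{\min}},48\}\le X'\le\frac{\mu}{2}$, and let $T(X')=\min\{t\ge0: X_t\ge X'\}$. Then \[E[T(X')]\le\max\Big\{24,\ \frac{4X'-2X_0}{\Delta_{\min}}\Big\}.\]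
   Context: $\mathrm{Bin}(m,p)$ denotes the binomial distribution with $m$ trials and success probability $p$. *)

theory Defs
  imports "HOL-Probability.Probability"
begin

definition capped_binomial_pmf :: "nat \<Rightarrow> nat \<Rightarrow> real \<Rightarrow> nat pmf" where
  "capped_binomial_pmf mu lam p = map_pmf (\<lambda>b. min mu b) (binomial_pmf lam p)"

definition hitting_time :: "(nat \<Rightarrow> 'a \<Rightarrow> nat) \<Rightarrow> real \<Rightarrow> 'a \<Rightarrow> ennreal" where
  "hitting_time X x' \<omega> =
     (if \<exists>t. x' \<le> real (X t \<omega>) then ennreal (real (LEAST t. x' \<le> real (X t \<omega>))) else \<top>)"

end

theory Submission
  imports Defs
begin

text \<open>
  Additive drift. Let \<open>\<delta> = min (\<Delta>min/2) (X'/12)\<close> and consider the potential that equals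
  \<open>min X\<^sub>t (2X')\<close> before the hitting time \<open>T\<close> and \<open>2X'\<close> from then on; it is bounded by \<open>2X'\<close>.
  While \<open>X\<^sub>t < X'\<close>, the binomial mean \<open>\<lambda>p\<^sub>t\<close> is at least \<open>X\<^sub>t + \<Delta>\<^sub>t\<close>, and the cap at \<open>\<mu> \<ge> 2X'\<close> is
  invisible after truncation at \<open>2X'\<close>. If \<open>\<lambda>p\<^sub>t \<le> 13X'/10\<close>, an exponential-moment bound shows that
  truncating at \<open>2X'\<close> loses at most \<open>\<Delta>min/2\<close> (this is where \<open>X' \<ge> 18 ln (2\<lambda>/\<Delta>min)\<close> enters);
  otherwise a lower-tail bound keeps the truncated mean above \<open>23X'/20 - 8/e \<ge> X' + X'/12\<close>.
  So the expected potential grows by at least \<open>\<delta> P(T > t)\<close> in step \<open>t\<close>, and summing,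
  \<open>\<delta> E[T] \<le> 2X' - min X\<^sub>0 (2X')\<close>.
\<close>

section \<open>Exponential moments of the binomial distribution\<close>

lemma expectation_binomial_pmf_exp:
  assumes p: "p \<in> {0..1}"
  shows "measure_pmf.expectation (binomial_pmf n p) (\<lambda>k. exp (t * real k)) = (p * exp t + (1 - p)) ^ n"
proof -
  have "measure_pmf.expectation (binomial_pmf n p) (\<lambda>k. exp (t * real k))
      = (\<Sum>k\<le>n. real (n choose k) * (p * exp t) ^ k * (1 - p) ^ (n - k))"
    unfolding expectation_binomial_pmf'[OF p]
    by (intro sum.cong refl) (simp add: power_mult_distrib exp_of_nat_mult[symmetric] mult_ac)
  also have "\<dots> = (p * exp t + (1 - p)) ^ n"
    by (subst binomial_ring) (simp add: atLeast0AtMost)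
  finally show ?thesis .
qed

lemma expectation_binomial_pmf_exp_le:
  assumes p: "p \<in> {0..1}"
  shows "measure_pmf.expectation (binomial_pmf n p) (\<lambda>k. exp (t * real k))
           \<le> exp (real n * p * (exp t - 1))"
proof -
  have "p * exp t + (1 - p) \<le> exp (p * (exp t - 1))"
    using exp_ge_add_one_self[of "p * (exp t - 1)"] by (simp add: algebra_simps)
  then have "(p * exp t + (1 - p)) ^ n \<le> exp (p * (exp t - 1)) ^ n"
    using p by (intro power_mono) auto
  then show ?thesis
    by (simp add: expectation_binomial_pmf_exp[OF p] exp_of_nat_mult[symmetric] mult_ac)
qed

lemma expectation_binomial_pmf_real:
  assumes p: "p \<in> {0..1}"
  shows "measure_pmf.expectation (binomial_pmf n p) real = real n * p"
proof (cases n)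
  case 0
  then show ?thesis by (simp add: expectation_binomial_pmf'[OF p])
next
  case (Suc m)
  have choose: "real (Suc m choose Suc k) * real (Suc k) = real (Suc m) * real (m choose k)" for k
    by (metis Suc_times_binomial_eq of_nat_mult)
  have "measure_pmf.expectation (binomial_pmf n p) real
      = (\<Sum>k\<le>Suc m. real (Suc m choose k) * real k * p ^ k * (1 - p) ^ (Suc m - k))"
    by (simp add: expectation_binomial_pmf'[OF p] Suc mult_ac)
  also have "\<dots> = (\<Sum>k\<le>m. real (Suc m choose Suc k) * real (Suc k) * p ^ Suc k * (1 - p) ^ (m - k))"
    by (subst sum.atMost_Suc_shift) simp
  also have "\<dots> = real (Suc m) * p * (\<Sum>k\<le>m. real (m choose k) * p ^ k * (1 - p) ^ (m - k))"
    unfolding choose by (simp add: sum_distrib_left mult_ac)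
  also have "\<dots> = real n * p"
    using binomial_ring[of p "1 - p" m] by (simp add: Suc atLeast0AtMost)
  finally show ?thesis .
qed

lemma pos_part_le_exp: "max y 0 \<le> exp (y - 1 :: real)"
  using exp_ge_add_one_self[of "y - 1"] by simp

lemma expectation_binomial_pmf_pos_part_le:
  assumes p: "p \<in> {0..1}"
  shows "measure_pmf.expectation (binomial_pmf n p) (\<lambda>k. max (t * real k - b) 0)
           \<le> exp (real n * p * (exp t - 1) - b - 1)"
proof -
  have "max (t * real k - b) 0 \<le> exp (- b - 1) * exp (t * real k)" for k
    using pos_part_le_exp[of "t * real k - b"] by (simp add: exp_add[symmetric] algebra_simps)
  then have "measure_pmf.expectation (binomial_pmf n p) (\<lambda>k. max (t * real k - b) 0)
      \<le> measure_pmf.expectation (binomial_pmf n p) (\<lambda>k. exp (- b - 1) * exp (t * real k))"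
    using p by (intro integral_mono) auto
  also have "\<dots> \<le> exp (- b - 1) * exp (real n * p * (exp t - 1))"
    using expectation_binomial_pmf_exp_le[OF p] by simp
  finally show ?thesis
    by (simp add: exp_add[symmetric] algebra_simps)
qed

lemma expectation_binomial_pmf_min_ge_of_small_mean:
  assumes p: "p \<in> {0..1}" and "0 \<le> x" and mean: "real n * p \<le> 13/10 * x"
  shows "real n * p - 5 * exp (- x / 18 - 1)
           \<le> measure_pmf.expectation (binomial_pmf n p) (\<lambda>k. min (real k) (2 * x))"
proof -
  have "exp (1/5 :: real) \<le> 1 + 1/5 + (1/5)\<^sup>2"
    by (rule exp_bound) auto
  then have "real n * p * (exp (1/5) - 1) \<le> 13/10 * x * (6/25)"
    using p \<open>0 \<le> x\<close> by (intro mult_mono[OF mean]) (auto simp: power2_eq_square)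
  then have "exp (real n * p * (exp (1/5) - 1) - 2 * x / 5 - 1) \<le> exp (- x / 18 - 1)"
    using \<open>0 \<le> x\<close> by simp
  then have tail: "measure_pmf.expectation (binomial_pmf n p) (\<lambda>k. max (1/5 * real k - 2 * x / 5) 0)
      \<le> exp (- x / 18 - 1)"
    using expectation_binomial_pmf_pos_part_le[OF p, of n "1/5" "2 * x / 5"] by linarith
  have "measure_pmf.expectation (binomial_pmf n p) (\<lambda>k. min (real k) (2 * x))
      = measure_pmf.expectation (binomial_pmf n p) (\<lambda>k. real k - 5 * max (1/5 * real k - 2 * x / 5) 0)"
    by (intro arg_cong[where f = "measure_pmf.expectation _"]) (auto simp: fun_eq_iff min_def max_def)
  also have "\<dots> = real n * p - 5 * measure_pmf.expectation (binomial_pmf n p) (\<lambda>k. max (1/5 * real k - 2 * x / 5) 0)"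
    using p by (simp add: expectation_binomial_pmf_real)
  finally show ?thesis
    using tail by linarith
qed

lemma expectation_binomial_pmf_min_ge_of_large_mean:
  assumes p: "p \<in> {0..1}" and "0 \<le> x" and mean: "13/10 * x \<le> real n * p"
  shows "23/20 * x - 8 / exp 1
           \<le> measure_pmf.expectation (binomial_pmf n p) (\<lambda>k. min (real k) (2 * x))"
proof -
  define a where "a = 23/20 * x"
  have "9/8 \<le> exp (1/8 :: real)"
    using exp_ge_add_one_self[of "1/8 :: real"] by simp
  then have "exp (- (1/8) :: real) - 1 \<le> - 1/9"
    by (simp add: exp_minus divide_simps)
  then have "real n * p * (exp (- (1/8)) - 1) \<le> 13/10 * x * (exp (- (1/8)) - 1)"
    by (intro mult_right_mono_neg[OF mean]) simp
  also have "\<dots> \<le> 13/10 * x * (- 1/9)"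
    using \<open>exp (- (1/8)) - 1 \<le> - 1/9\<close> \<open>0 \<le> x\<close> by (intro mult_left_mono) auto
  finally have "real n * p * (exp (- (1/8)) - 1) \<le> 13/10 * x * (- 1/9)" .
  then have "exp (real n * p * (exp (- (1/8)) - 1) - - a / 8 - 1) \<le> exp (- 1)"
    using \<open>0 \<le> x\<close> by (simp add: a_def)
  then have tail: "measure_pmf.expectation (binomial_pmf n p) (\<lambda>k. max (- (1/8) * real k - - a / 8) 0)
      \<le> 1 / exp 1"
    using expectation_binomial_pmf_pos_part_le[OF p, of n "- (1/8)" "- a / 8"]
    by (simp add: exp_minus inverse_eq_divide)
  have "a - 8 * max (- (1/8) * real k - - a / 8) 0 \<le> min (real k) (2 * x)" for k
    using \<open>0 \<le> x\<close> by (auto simp: a_def max_def min_def)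
  then have "measure_pmf.expectation (binomial_pmf n p) (\<lambda>k. a - 8 * max (- (1/8) * real k - - a / 8) 0)
      \<le> measure_pmf.expectation (binomial_pmf n p) (\<lambda>k. min (real k) (2 * x))"
    using p by (intro integral_mono) auto
  moreover have "measure_pmf.expectation (binomial_pmf n p) (\<lambda>k. a - 8 * max (- (1/8) * real k - - a / 8) 0)
      = a - 8 * measure_pmf.expectation (binomial_pmf n p) (\<lambda>k. max (- (1/8) * real k - - a / 8) 0)"
    using p by simp
  ultimately have "a - 8 * measure_pmf.expectation (binomial_pmf n p) (\<lambda>k. max (- (1/8) * real k - - a / 8) 0)
      \<le> measure_pmf.expectation (binomial_pmf n p) (\<lambda>k. min (real k) (2 * x))"
    by simp
  then show ?thesis
    using tail unfolding a_def by linarith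
qed

lemma exp_one_ge: "5/2 \<le> (exp 1 :: real)"
  using exp_lower_Taylor_quadratic[of 1] by simp

lemma five_exp_le_of_ln_le:
  fixes lam D y :: real
  assumes lam: "exp 1 \<le> lam" and D: "0 < D" and y: "18 * ln (2 * lam / D) \<le> y"
  shows "5 * exp (- y / 18 - 1) \<le> D / 2"
proof -
  have lam_pos: "0 < lam"
    using lam exp_gt_zero[of 1] by linarith
  have "5/2 * (5/2) \<le> lam * exp 1"
    using lam exp_one_ge by (intro mult_mono) auto
  then have lam_ge: "5 / exp 1 \<le> lam"
    by (simp add: divide_le_eq)
  have "2 * lam / D = exp (ln (2 * lam / D))"
    using lam_pos D by simp
  also have "\<dots> \<le> exp (y / 18)"
    using y by simp
  finally have "exp (- y / 18) \<le> D / (2 * lam)"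
    using D lam_pos by (simp add: exp_minus field_simps)
  with lam_ge lam_pos have "5 / exp 1 * exp (- y / 18) \<le> lam * (D / (2 * lam))"
    by (intro mult_mono) auto
  then show ?thesis
    using lam_pos by (simp add: exp_diff)
qed

lemma capped_binomial_drift:
  fixes mu lam x :: nat and D Dmin X' :: real
  assumes x: "real x < X'" and Dmin: "0 < Dmin" "Dmin \<le> D"
    and p_le: "(real x + D) / (exp 1 * real mu) \<le> 1"
    and lam: "exp 1 * real mu \<le> real lam" and "0 < mu"
    and X'_ln: "18 * ln (2 * real lam / Dmin) \<le> X'" and "48 \<le> X'" and X'_le: "2 * X' \<le> real mu"
  shows "real x + min (Dmin / 2) (X' / 12)
           \<le> measure_pmf.expectation (capped_binomial_pmf mu lam ((real x + D) / (exp 1 * real mu)))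
               (\<lambda>k. min (real k) (2 * X'))"
proof -
  define p where "p = (real x + D) / (exp 1 * real mu)"
  have p: "p \<in> {0..1}"
    using Dmin p_le \<open>0 < mu\<close> by (auto simp: p_def)
  have "1 \<le> real lam / (exp 1 * real mu)"
    using lam \<open>0 < mu\<close> by simp
  then have mean: "real x + D \<le> real lam * p"
    using Dmin mult_right_mono[of 1 "real lam / (exp 1 * real mu)" "real x + D"] by (simp add: p_def)
  have "min (real (min mu k)) (2 * X') = min (real k) (2 * X')" for k
    using X'_le by (auto simp: min_def)
  then have capped: "measure_pmf.expectation (capped_binomial_pmf mu lam p) (\<lambda>k. min (real k) (2 * X'))
      = measure_pmf.expectation (binomial_pmf lam p) (\<lambda>k. min (real k) (2 * X'))"
    by (simp add: capped_binomial_pmf_def)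
  have "exp 1 \<le> exp 1 * real mu"
    using \<open>0 < mu\<close> by simp
  then have "exp 1 \<le> real lam"
    using lam by linarith
  then have small: "5 * exp (- X' / 18 - 1) \<le> Dmin / 2"
    using Dmin(1) X'_ln by (rule five_exp_le_of_ln_le)
  have "0 \<le> X'" "min (Dmin / 2) (X' / 12) \<le> Dmin / 2" "min (Dmin / 2) (X' / 12) \<le> X' / 12"
    using \<open>48 \<le> X'\<close> by auto
  show ?thesis
    unfolding p_def[symmetric] capped
  proof (cases "real lam * p \<le> 13/10 * X'")
    case True
    then show "real x + min (Dmin / 2) (X' / 12)
        \<le> measure_pmf.expectation (binomial_pmf lam p) (\<lambda>k. min (real k) (2 * X'))"
      using expectation_binomial_pmf_min_ge_of_small_mean[OF p \<open>0 \<le> X'\<close> True] mean small Dmin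
        \<open>min (Dmin / 2) (X' / 12) \<le> Dmin / 2\<close> by linarith
  next
    case False
    then have "13/10 * X' \<le> real lam * p"
      by simp
    moreover have "8 / exp 1 \<le> (16/5 :: real)"
      using exp_one_ge by (simp add: field_simps)
    ultimately show "real x + min (Dmin / 2) (X' / 12)
        \<le> measure_pmf.expectation (binomial_pmf lam p) (\<lambda>k. min (real k) (2 * X'))"
      using expectation_binomial_pmf_min_ge_of_large_mean[OF p \<open>0 \<le> X'\<close>, of lam] x \<open>48 \<le> X'\<close>
        \<open>min (Dmin / 2) (X' / 12) \<le> X' / 12\<close> by linarith
  qed
qed

section \<open>Conditional laws, hitting times and additive drift\<close>

lemma (in prob_space) nn_set_integral_cond_pmf:
  fixes Y :: "'a \<Rightarrow> nat" and q :: "'a \<Rightarrow> nat pmf" and g :: "nat \<Rightarrow> ennreal"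
  assumes G: "subalgebra M G" and Y[measurable]: "Y \<in> M \<rightarrow>\<^sub>M count_space UNIV"
    and law: "\<And>k. AE \<omega> in M. real_cond_exp M G (indicator {\<omega>. Y \<omega> = k}) \<omega> = pmf (q \<omega>) k"
    and A: "A \<in> sets G"
  shows "(\<integral>\<^sup>+\<omega>\<in>A. g (Y \<omega>) \<partial>M) = (\<integral>\<^sup>+\<omega>\<in>A. (\<integral>\<^sup>+k. g k \<partial>q \<omega>) \<partial>M)"
proof -
  interpret G: sigma_finite_subalgebra M G
    using G by (intro finite_measure_subalgebra_is_sigma_finite)
      (simp add: finite_measure_subalgebra_def finite_measure_subalgebra_axioms_def finite_measure_axioms)
  define CE where "CE k = real_cond_exp M G (indicator {\<omega>. Y \<omega> = k})" for k
  have [measurable]: "A \<in> sets M"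
    using A G by (auto simp: subalgebra_def)
  have indicator_A: "(indicator A :: 'a \<Rightarrow> real) \<in> borel_measurable G"
    using A by simp
  have law': "AE \<omega> in M. \<forall>k. CE k \<omega> = pmf (q \<omega>) k"
    unfolding AE_all_countable CE_def using law by blast
  have tower: "(\<integral>\<^sup>+\<omega>\<in>A. indicator {\<omega>. Y \<omega> = k} \<omega> \<partial>M)
      = (\<integral>\<^sup>+\<omega>\<in>A. ennreal (CE k \<omega>) \<partial>M)" for k
  proof -
    have int: "integrable M (\<lambda>\<omega>. indicator A \<omega> * indicator {\<omega>. Y \<omega> = k} \<omega> :: real)"
      by (rule integrable_const_bound[where B = 1]) (auto simp: indicator_def)
    have "(indicator {\<omega>. Y \<omega> = k} :: 'a \<Rightarrow> real) \<in> borel_measurable M"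
      by measurable
    note CE_intg = G.real_cond_exp_intg[OF int indicator_A this, folded CE_def]
    have "(\<integral>\<^sup>+\<omega>\<in>A. indicator {\<omega>. Y \<omega> = k} \<omega> \<partial>M)
        = ennreal (\<integral>\<omega>. indicator A \<omega> * indicator {\<omega>. Y \<omega> = k} \<omega> \<partial>M)"
      using int by (subst nn_integral_eq_integral[symmetric]) (auto simp: mult.commute ennreal_indicator ennreal_mult)
    also have "\<dots> = ennreal (\<integral>\<omega>. indicator A \<omega> * CE k \<omega> \<partial>M)"
      using CE_intg(2) by simp
    also have "\<dots> = (\<integral>\<^sup>+\<omega>. ennreal (indicator A \<omega> * CE k \<omega>) \<partial>M)"
      using law' by (intro nn_integral_eq_integral[symmetric] CE_intg(1)) auto
    also have "\<dots> = (\<integral>\<^sup>+\<omega>\<in>A. ennreal (CE k \<omega>) \<partial>M)"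
      by (intro nn_integral_cong) (simp add: indicator_mult_ennreal mult.commute)
    finally show ?thesis .
  qed
  have "(\<integral>\<^sup>+\<omega>\<in>A. g (Y \<omega>) \<partial>M)
      = (\<integral>\<^sup>+\<omega>. (\<Sum>k. g k * (indicator {\<omega>. Y \<omega> = k} \<omega> * indicator A \<omega>)) \<partial>M)"
  proof (intro nn_integral_cong)
    fix \<omega>
    have "(\<Sum>k. g k * (indicator {\<omega>. Y \<omega> = k} \<omega> * indicator A \<omega>))
        = (\<Sum>k\<in>{Y \<omega>}. g k * (indicator {\<omega>. Y \<omega> = k} \<omega> * indicator A \<omega>))"
      by (rule suminf_finite) auto
    then show "g (Y \<omega>) * indicator A \<omega> = (\<Sum>k. g k * (indicator {\<omega>. Y \<omega> = k} \<omega> * indicator A \<omega>))"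
      by (simp only: sum.insert_remove) (simp split: split_indicator)
  qed
  also have "\<dots> = (\<Sum>k. g k * (\<integral>\<^sup>+\<omega>\<in>A. indicator {\<omega>. Y \<omega> = k} \<omega> \<partial>M))"
    by (simp add: nn_integral_suminf nn_integral_cmult)
  also have "\<dots> = (\<Sum>k. g k * (\<integral>\<^sup>+\<omega>\<in>A. ennreal (CE k \<omega>) \<partial>M))"
    by (simp only: tower)
  also have "\<dots> = (\<integral>\<^sup>+\<omega>. (\<Sum>k. g k * (ennreal (CE k \<omega>) * indicator A \<omega>)) \<partial>M)"
    by (simp add: nn_integral_suminf nn_integral_cmult CE_def)
  also have "\<dots> = (\<integral>\<^sup>+\<omega>\<in>A. (\<Sum>k. ennreal (pmf (q \<omega>) k) * g k) \<partial>M)"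
  proof (intro nn_integral_cong_AE)
    have "(\<Sum>k. g k * (ennreal (CE k \<omega>) * indicator A \<omega>)) = (\<Sum>k. ennreal (CE k \<omega>) * g k) * indicator A \<omega>"
      for \<omega>
      by (subst ennreal_suminf_multc[symmetric]) (simp only: mult_ac)
    then show "AE \<omega> in M. (\<Sum>k. g k * (ennreal (CE k \<omega>) * indicator A \<omega>))
        = (\<Sum>k. ennreal (pmf (q \<omega>) k) * g k) * indicator A \<omega>"
      using law' by auto
  qed
  also have "\<dots> = (\<integral>\<^sup>+\<omega>\<in>A. (\<integral>\<^sup>+k. g k \<partial>q \<omega>) \<partial>M)"
    by (simp add: nn_integral_measure_pmf nn_integral_count_space_nat)
  finally show ?thesis .
qed

lemma hitting_time_eq_suminf:
  "hitting_time X x' \<omega> = (\<Sum>t. indicator {\<omega>. \<forall>s\<le>t. real (X s \<omega>) < x'} \<omega> :: ennreal)"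
proof (cases "\<exists>t. x' \<le> real (X t \<omega>)")
  case True
  define T where "T = (LEAST t. x' \<le> real (X t \<omega>))"
  have before_T: "(\<forall>s\<le>t. real (X s \<omega>) < x') \<longleftrightarrow> t < T" for t
    using LeastI_ex[OF True] not_less_Least[of _ "\<lambda>t. x' \<le> real (X t \<omega>)"]
    unfolding T_def by (meson le_less_trans not_le)
  have "(\<Sum>t. indicator {\<omega>. \<forall>s\<le>t. real (X s \<omega>) < x'} \<omega> :: ennreal)
      = (\<Sum>t<T. indicator {\<omega>. \<forall>s\<le>t. real (X s \<omega>) < x'} \<omega>)"
    by (rule suminf_finite) (auto simp: before_T)
  also have "\<dots> = of_nat T"
    by (simp add: before_T)
  finally show ?thesis
    using True by (simp add: hitting_time_def T_def ennreal_of_nat_eq_real_of_nat)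
next
  case False
  then have "(\<Sum>t. indicator {\<omega>. \<forall>s\<le>t. real (X s \<omega>) < x'} \<omega> :: ennreal) = (\<Sum>t. 1)"
    by (simp add: not_le)
  also have "\<dots> = \<top>"
    by (simp add: suminf_eq_SUP ennreal_SUP_of_nat_eq_top)
  finally show ?thesis
    using False by (simp add: hitting_time_def)
qed

lemma nn_integral_hitting_time:
  assumes [measurable]: "\<And>t. X t \<in> M \<rightarrow>\<^sub>M count_space UNIV"
  shows "(\<integral>\<^sup>+\<omega>. hitting_time X x' \<omega> \<partial>M) = (\<Sum>t. emeasure M {\<omega> \<in> space M. \<forall>s\<le>t. real (X s \<omega>) < x'})"
proof -
  have "(\<integral>\<^sup>+\<omega>. hitting_time X x' \<omega> \<partial>M)
      = (\<integral>\<^sup>+\<omega>. (\<Sum>t. indicator {\<omega> \<in> space M. \<forall>s\<le>t. real (X s \<omega>) < x'} \<omega>) \<partial>M)"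
    by (intro nn_integral_cong) (simp add: hitting_time_eq_suminf indicator_def)
  also have "\<dots> = (\<Sum>t. emeasure M {\<omega> \<in> space M. \<forall>s\<le>t. real (X s \<omega>) < x'})"
    by (subst nn_integral_suminf) auto
  finally show ?thesis .
qed

lemma (in prob_space) suminf_prob_le_of_additive_drift:
  fixes V :: "nat \<Rightarrow> 'a \<Rightarrow> real"
  assumes "\<And>t. integrable M (V t)" and "\<And>t \<omega>. \<omega> \<in> space M \<Longrightarrow> V t \<omega> \<le> c" and "0 < \<delta>"
    and drift: "\<And>t. \<delta> * prob (A t) \<le> expectation (V (Suc t)) - expectation (V t)"
  shows "(\<Sum>t. ennreal (prob (A t))) \<le> ennreal ((c - expectation (V 0)) / \<delta>)"
proof (rule suminf_le_const)
  fix n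
  have "\<delta> * (\<Sum>t<n. prob (A t)) \<le> (\<Sum>t<n. expectation (V (Suc t)) - expectation (V t))"
    unfolding sum_distrib_left by (intro sum_mono drift)
  also have "\<dots> = expectation (V n) - expectation (V 0)"
    by (rule sum_lessThan_telescope)
  also have "expectation (V n) \<le> c"
    using integral_mono[OF assms(1) integrable_const, of n c] assms(2) by (simp add: prob_space)
  finally have "(\<Sum>t<n. prob (A t)) \<le> (c - expectation (V 0)) / \<delta>"
    using \<open>0 < \<delta>\<close> by (simp add: field_simps mult.commute)
  then show "(\<Sum>t<n. ennreal (prob (A t))) \<le> ennreal ((c - expectation (V 0)) / \<delta>)"
    by (subst sum_ennreal) (auto intro: ennreal_leI)
qed simp

section \<open>The capped binomial process\<close>

locale capped_binomial_process = prob_space M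
  for M :: "'a measure" +
  fixes F :: "nat \<Rightarrow> 'a measure" and X :: "nat \<Rightarrow> 'a \<Rightarrow> nat" and \<Delta> :: "nat \<Rightarrow> 'a \<Rightarrow> real"
    and mu lam :: nat and \<Delta>min X' :: real
  assumes subalgebra: "\<And>t. subalgebra M (F t)"
    and filtration: "\<And>s t. s \<le> t \<Longrightarrow> sets (F s) \<subseteq> sets (F t)"
    and adapted: "\<And>t. X t \<in> F t \<rightarrow>\<^sub>M count_space UNIV"
    and mu_pos: "0 < mu" and lam_ge: "exp 1 * real mu \<le> real lam"
    and \<Delta>min_pos: "0 < \<Delta>min" and \<Delta>_ge: "\<And>t \<omega>. \<omega> \<in> space M \<Longrightarrow> \<Delta>min \<le> \<Delta> t \<omega>"
    and success_prob_le_1: "\<And>t \<omega>. \<omega> \<in> space M \<Longrightarrow> (real (X t \<omega>) + \<Delta> t \<omega>) / (exp 1 * real mu) \<le> 1"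
    and cond_law: "\<And>t k. AE \<omega> in M.
      real_cond_exp M (F t) (\<lambda>\<omega>. indicator {\<omega>. X (Suc t) \<omega> = k} \<omega>) \<omega>
        = pmf (capped_binomial_pmf mu lam ((real (X t \<omega>) + \<Delta> t \<omega>) / (exp 1 * real mu))) k"
    and X'_ge: "max (18 * ln (2 * real lam / \<Delta>min)) 48 \<le> X'" and X'_le: "X' \<le> real mu / 2"
begin

definition not_hit :: "nat \<Rightarrow> 'a set" where
  "not_hit t = {\<omega> \<in> space M. \<forall>s\<le>t. real (X s \<omega>) < X'}"

definition potential :: "nat \<Rightarrow> 'a \<Rightarrow> real" where
  "potential t \<omega> = (if \<forall>s<t. real (X s \<omega>) < X' then min (real (X t \<omega>)) (2 * X') else 2 * X')"

definition drift :: real where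
  "drift = min (\<Delta>min / 2) (X' / 12)"

lemma drift_pos: "0 < drift"
  using \<Delta>min_pos X'_ge by (simp add: drift_def)

lemma X_measurable[measurable]: "X t \<in> M \<rightarrow>\<^sub>M count_space UNIV"
  by (rule measurable_from_subalg[OF subalgebra adapted])

lemma not_hit_in_filtration: "not_hit t \<in> sets (F t)"
proof -
  have "space (F t) = space M"
    using subalgebra by (simp add: subalgebra_def)
  moreover have X_F: "X s \<in> F t \<rightarrow>\<^sub>M count_space UNIV" if "s \<le> t" for s
    using adapted[of s] filtration[OF that] \<open>space (F t) = space M\<close> subalgebra[of s]
    by (auto simp: measurable_def subalgebra_def)
  ultimately have "not_hit t = (\<Inter>s\<in>{..t}. X s -` {k. real k < X'} \<inter> space (F t))"
    by (auto simp: not_hit_def)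
  also have "\<dots> \<in> sets (F t)"
    using X_F by (intro sets.finite_INT measurable_sets) auto
  finally show ?thesis .
qed

lemma not_hit_events[measurable]: "not_hit t \<in> events"
  using not_hit_in_filtration subalgebra by (auto simp: subalgebra_def)

lemma set_integral_truncated_drift:
  "(\<integral>\<omega>\<in>not_hit t. min (real (X t \<omega>)) (2 * X') + drift \<partial>M)
     \<le> (\<integral>\<omega>\<in>not_hit t. min (real (X (Suc t) \<omega>)) (2 * X') \<partial>M)"
proof -
  define q where "q \<omega> = capped_binomial_pmf mu lam ((real (X t \<omega>) + \<Delta> t \<omega>) / (exp 1 * real mu))" for \<omega>
  have "ennreal (min (real (X t \<omega>)) (2 * X') + drift) \<le> (\<integral>\<^sup>+k. ennreal (min (real k) (2 * X')) \<partial>q \<omega>)"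
    if "\<omega> \<in> not_hit t" for \<omega>
  proof -
    have "\<omega> \<in> space M" "real (X t \<omega>) < X'"
      using that by (auto simp: not_hit_def)
    then have "min (real (X t \<omega>)) (2 * X') + drift
        \<le> measure_pmf.expectation (q \<omega>) (\<lambda>k. min (real k) (2 * X'))"
      using capped_binomial_drift[OF _ \<Delta>min_pos \<Delta>_ge success_prob_le_1 lam_ge mu_pos] X'_ge X'_le
      by (simp add: q_def drift_def)
    then have "ennreal (min (real (X t \<omega>)) (2 * X') + drift)
        \<le> ennreal (measure_pmf.expectation (q \<omega>) (\<lambda>k. min (real k) (2 * X')))"
      by (rule ennreal_leI)
    also have "\<dots> = (\<integral>\<^sup>+k. ennreal (min (real k) (2 * X')) \<partial>q \<omega>)"
      using X'_ge by (intro nn_integral_eq_integral[symmetric])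
        (auto intro!: measure_pmf.integrable_const_bound[where B = "2 * X'"])
    finally show ?thesis .
  qed
  then have "(\<integral>\<^sup>+\<omega>\<in>not_hit t. ennreal (min (real (X t \<omega>)) (2 * X') + drift) \<partial>M)
      \<le> (\<integral>\<^sup>+\<omega>\<in>not_hit t. (\<integral>\<^sup>+k. ennreal (min (real k) (2 * X')) \<partial>q \<omega>) \<partial>M)"
    by (intro nn_integral_mono) (simp split: split_indicator)
  also have "\<dots> = (\<integral>\<^sup>+\<omega>\<in>not_hit t. ennreal (min (real (X (Suc t) \<omega>)) (2 * X')) \<partial>M)"
    unfolding q_def
    by (rule nn_set_integral_cond_pmf[symmetric, OF subalgebra X_measurable cond_law not_hit_in_filtration])
  finally have "ennreal (\<integral>\<omega>\<in>not_hit t. min (real (X t \<omega>)) (2 * X') + drift \<partial>M)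
      \<le> ennreal (\<integral>\<omega>\<in>not_hit t. min (real (X (Suc t) \<omega>)) (2 * X') \<partial>M)"
    using X'_ge drift_pos
    by (subst (asm) (1 2) nn_set_integral_eq_set_integral)
      (auto intro!: integrable_const_bound[where B = "2 * X' + drift"])
  moreover have "0 \<le> (\<integral>\<omega>\<in>not_hit t. min (real (X (Suc t) \<omega>)) (2 * X') \<partial>M)"
    using X'_ge unfolding set_lebesgue_integral_def by (intro integral_nonneg_AE) auto
  ultimately show ?thesis
    by simp
qed

lemma potential_bounds: "0 \<le> potential t \<omega>" "potential t \<omega> \<le> 2 * X'"
  using X'_ge by (auto simp: potential_def)

lemma potential_measurable[measurable]: "potential t \<in> borel_measurable M"
  unfolding potential_def by measurable

lemma integrable_potential: "integrable M (potential t)"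
  using potential_bounds by (intro integrable_const_bound[where B = "2 * X'"]) auto

lemma potential_Suc_ge:
  assumes "\<omega> \<in> space M"
  shows "indicator (not_hit t) \<omega> * (min (real (X (Suc t) \<omega>)) (2 * X') - min (real (X t \<omega>)) (2 * X'))
           \<le> potential (Suc t) \<omega> - potential t \<omega>"
proof (cases "\<omega> \<in> not_hit t")
  case True
  then have "\<forall>s<Suc t. real (X s \<omega>) < X'"
    by (auto simp: not_hit_def)
  then show ?thesis
    using True by (simp add: potential_def)
next
  case False
  then have "\<not> (\<forall>s<Suc t. real (X s \<omega>) < X')"
    using assms by (auto simp: not_hit_def less_Suc_eq_le)
  then show ?thesis
    using False potential_bounds(2)[of t \<omega>] by (auto simp: potential_def[of "Suc t"])
qed

lemma potential_increment:
  "drift * prob (not_hit t) \<le> expectation (potential (Suc t)) - expectation (potential t)"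
proof -
  define m where "m s \<omega> = min (real (X s \<omega>)) (2 * X')" for s \<omega>
  have m_integrable: "set_integrable M (not_hit t) (m s)" for s
    unfolding set_integrable_def m_def using X'_ge
    by (intro integrable_const_bound[where B = "2 * X'"]) (auto simp: indicator_def)
  have drift_integrable: "set_integrable M (not_hit t) (\<lambda>_. drift)"
    unfolding set_integrable_def by (rule integrable_mult_indicator[OF not_hit_events integrable_const])
  have "drift * prob (not_hit t) = (\<integral>\<omega>\<in>not_hit t. m t \<omega> + drift \<partial>M) - (\<integral>\<omega>\<in>not_hit t. m t \<omega> \<partial>M)"
    using m_integrable drift_integrable by (simp add: set_integral_const emeasure_eq_measure)
  also have "\<dots> \<le> (\<integral>\<omega>\<in>not_hit t. m (Suc t) \<omega> \<partial>M) - (\<integral>\<omega>\<in>not_hit t. m t \<omega> \<partial>M)"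
    using set_integral_truncated_drift[of t, folded m_def] by simp
  also have "\<dots> = (\<integral>\<omega>\<in>not_hit t. m (Suc t) \<omega> - m t \<omega> \<partial>M)"
    using m_integrable by simp
  also have "\<dots> \<le> (\<integral>\<omega>. potential (Suc t) \<omega> - potential t \<omega> \<partial>M)"
    using set_integral_diff(1)[OF m_integrable m_integrable] integrable_potential potential_Suc_ge
    unfolding set_lebesgue_integral_def set_integrable_def by (intro integral_mono) (auto simp: m_def)
  also have "\<dots> = expectation (potential (Suc t)) - expectation (potential t)"
    using integrable_potential by simp
  finally show ?thesis .
qed

lemma potential_gap_div_drift_le:
  "(2 * X' - min (real x0) (2 * X')) / drift \<le> max 24 ((4 * X' - 2 * real x0) / \<Delta>min)"
proof (cases "\<Delta>min / 2 \<le> X' / 12")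
  case True
  then have "(2 * X' - min (real x0) (2 * X')) / drift = (4 * X' - 2 * min (real x0) (2 * X')) / \<Delta>min"
    by (simp add: drift_def field_simps)
  also have "\<dots> \<le> max 24 ((4 * X' - 2 * real x0) / \<Delta>min)"
    by (cases "real x0 \<le> 2 * X'") auto
  finally show ?thesis .
next
  case False
  then have "(2 * X' - min (real x0) (2 * X')) / drift = 12 * (2 * X' - min (real x0) (2 * X')) / X'"
    by (simp add: drift_def)
  also have "\<dots> \<le> 24"
    using X'_ge by (simp add: field_simps)
  finally show ?thesis
    by simp
qed

theorem nn_integral_hitting_time_le:
  assumes "\<And>\<omega>. \<omega> \<in> space M \<Longrightarrow> X 0 \<omega> = x0"
  shows "(\<integral>\<^sup>+\<omega>. hitting_time X X' \<omega> \<partial>M) \<le> ennreal (max 24 ((4 * X' - 2 * real x0) / \<Delta>min))"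
proof -
  have "expectation (potential 0) = expectation (\<lambda>_. min (real x0) (2 * X'))"
    using assms by (intro Bochner_Integration.integral_cong) (simp_all add: potential_def)
  then have potential_0: "expectation (potential 0) = min (real x0) (2 * X')"
    by (simp add: prob_space)
  have "(\<integral>\<^sup>+\<omega>. hitting_time X X' \<omega> \<partial>M) = (\<Sum>t. ennreal (prob (not_hit t)))"
    by (simp add: nn_integral_hitting_time not_hit_def emeasure_eq_measure)
  also have "\<dots> \<le> ennreal ((2 * X' - expectation (potential 0)) / drift)"
    by (intro suminf_prob_le_of_additive_drift integrable_potential potential_bounds(2) drift_pos
        potential_increment)
  also have "\<dots> \<le> ennreal (max 24 ((4 * X' - 2 * real x0) / \<Delta>min))"
    using potential_gap_div_drift_le by (simp add: potential_0 ennreal_leI)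
  finally show ?thesis .
qed

end

theorem lemma7:
  fixes M :: "'a measure"
    and F :: "nat \<Rightarrow> 'a measure"
    and X :: "nat \<Rightarrow> 'a \<Rightarrow> nat"
    and \<Delta> :: "nat \<Rightarrow> 'a \<Rightarrow> real"
    and mu lam x0 :: nat
    and \<Delta>min X' :: real
  assumes "prob_space M"
    and "\<And>t. subalgebra M (F t)"
    and "\<And>s t. s \<le> t \<Longrightarrow> sets (F s) \<subseteq> sets (F t)"
    and "\<And>t. X t \<in> measurable (F t) (count_space UNIV)"
    and "\<And>t. \<Delta> t \<in> borel_measurable (F t)"
    and "mu > 0" and "lam > 0"
    and "real lam \<ge> exp 1 * real mu"
    and "0 < \<Delta>min" and "\<Delta>min < real lam"
    and "\<And>t \<omega>. \<omega> \<in> space M \<Longrightarrow> \<Delta> t \<omega> \<ge> \<Delta>min"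
    and "\<And>t \<omega>. \<omega> \<in> space M \<Longrightarrow> (real (X t \<omega>) + \<Delta> t \<omega>) / (exp 1 * real mu) \<le> 1"
    and "\<And>\<omega>. \<omega> \<in> space M \<Longrightarrow> X 0 \<omega> = x0"
    and "\<And>t k. AE \<omega> in M.
           real_cond_exp M (F t) (\<lambda>\<omega>. indicator {\<omega>. X (Suc t) \<omega> = k} \<omega>) \<omega>
         = pmf (capped_binomial_pmf mu lam ((real (X t \<omega>) + \<Delta> t \<omega>) / (exp 1 * real mu))) k"
    and "max (18 * ln (2 * real lam / \<Delta>min)) 48 \<le> X'"
    and "X' \<le> real mu / 2"
  shows "(\<integral>\<^sup>+ \<omega>. hitting_time X X' \<omega> \<partial>M)
           \<le> ennreal (max 24 ((4 * X' - 2 * real x0) / \<Delta>min))"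
proof -
  interpret capped_binomial_process M F X \<Delta> mu lam \<Delta>min X'
    by (intro capped_binomial_process.intro capped_binomial_process_axioms.intro) (fact assms)+
  show ?thesis
    using assms(13) by (rule nn_integral_hitting_time_le)
qed

end
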